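(* For every $\varepsilon>0$, the set $K_{2.33529\dots+\varepsilon}$ is uncountable, where $2.33529\dots$ is the unique real root of $x^5-x^4-2x^3-2x^2-x-1$ and $K_\alpha$ denotes the set of all closed permutation classes $X$ for which there exists $n_0$ such that $|X\cap S_n|<\alpha^n$ for all $n>n_0$.
   Context: $S_n$ is the set of permutations of $[n]$, $S=\bigcup_n S_n$; $\pi\prec\rho$ means $\rho$ (as a sequence) has a subsequence order-isomorphic to $\pi$; a closed permutation class is a set $X\subset S$ such that $\pi\prec\sigma\in X$ implies $\pi\in X$. *)

theory Defs
  imports Complex_Main "HOL-Library.Countable_Set"
begin

definition perms :: "nat \<Rightarrow> nat list set" where
  "perms n = {xs. distinct xs \<and> set xs = {1..n}}"

definition allPerms :: "nat list set" where
  "allPerms = (\<Union>n. perms n)"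

definition order_iso :: "nat list \<Rightarrow> nat list \<Rightarrow> bool" where
  "order_iso xs ys \<longleftrightarrow> length xs = length ys \<and>
     (\<forall>i<length xs. \<forall>j<length xs. (xs ! i < xs ! j) \<longleftrightarrow> (ys ! i < ys ! j))"

definition pattern_le :: "nat list \<Rightarrow> nat list \<Rightarrow> bool" where
  "pattern_le \<pi> \<rho> \<longleftrightarrow> (\<exists>I \<subseteq> {..<length \<rho>}. order_iso (nths \<rho> I) \<pi>)"

definition closed_class :: "nat list set \<Rightarrow> bool" where
  "closed_class X \<longleftrightarrow> X \<subseteq> allPerms \<and>
     (\<forall>\<sigma>\<in>X. \<forall>\<pi>\<in>allPerms. pattern_le \<pi> \<sigma> \<longrightarrow> \<pi> \<in> X)"

definition K :: "real \<Rightarrow> nat list set set" where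
  "K \<alpha> = {X. closed_class X \<and>
     (\<exists>n0. \<forall>n>n0. real (card (X \<inter> perms n)) < \<alpha> ^ n)}"

definition root_const :: real where
  "root_const = (THE x::real. x^5 - x^4 - 2*x^3 - 2*x^2 - x - 1 = 0)"

end

(*
  The permutations osc m (m >= 2) form an infinite antichain. The inversion graph of osc m is a
  path with a fork at each end; a pattern embedding of osc m into osc m' embeds inversion graphs,
  so it must send forks to forks, and it cannot shorten the path between them. Hence the
  downward closures of the sets {osc (k+2) | k in S}, S a set of naturals, are uncountably many
  distinct closed classes.

  All of them lie in the downward closure of all oscillations. A member of length n of it is
  determined by a word of length n - 1 recording, along an occurrence in some oscillation, where
  inversions can occur and the height differences; away from its first and last twelve letters
  this word uses a four-letter alphabet subject to a local rule, and a weight function on pairs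
  of letters shows that there are O(2.3^n) such words. As 2.3 < 2.33529..., this growth bound
  suffices.
*)

theory Submission
  imports Defs
begin

section \<open>Patterns and closed classes\<close>

lemma nths_conv_map_filter: "nths xs I = map ((!) xs) (filter (\<lambda>i. i \<in> I) [0..<length xs])"
proof -
  have "zip xs [0..<length xs] = map (\<lambda>i. (xs!i, i)) [0..<length xs]"
    by (rule nth_equalityI) auto
  then show ?thesis unfolding nths_def by (simp add: filter_map comp_def)
qed

lemma order_iso_refl: "order_iso xs xs"
  by (simp add: order_iso_def)

lemma order_iso_sym: "order_iso xs ys \<Longrightarrow> order_iso ys xs"
  by (simp add: order_iso_def)

lemma order_iso_trans: "order_iso xs ys \<Longrightarrow> order_iso ys zs \<Longrightarrow> order_iso xs zs"
  by (simp add: order_iso_def)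

lemma order_iso_map_nth:
  assumes "order_iso xs ys" "\<forall>i\<in>set P. i < length xs"
  shows "order_iso (map ((!) xs) P) (map ((!) ys) P)"
  using assms unfolding order_iso_def by auto

lemma order_iso_nths:
  assumes "order_iso xs ys"
  shows "order_iso (nths xs J) (nths ys J)"
proof -
  have l: "length xs = length ys" using assms by (simp add: order_iso_def)
  show ?thesis unfolding nths_conv_map_filter l[symmetric] by (rule order_iso_map_nth[OF assms]) auto
qed

lemma order_iso_if_same_inversions:
  assumes "distinct xs" "distinct ys" "length xs = length ys"
    and "\<And>s t. s < t \<Longrightarrow> t < length xs \<Longrightarrow> xs!t < xs!s \<longleftrightarrow> ys!t < ys!s"
  shows "order_iso xs ys"
  unfolding order_iso_def
proof (intro conjI allI impI)
  show "length xs = length ys" by fact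
  fix i j assume ij: "i < length xs" "j < length xs"
  consider "i < j" | "i = j" | "j < i" by linarith
  then show "xs ! i < xs ! j \<longleftrightarrow> ys ! i < ys ! j"
  proof cases
    case 1
    have "xs!i \<noteq> xs!j" "ys!i \<noteq> ys!j" using assms(1-3) ij 1 by (auto simp: nth_eq_iff_index_eq)
    then show ?thesis using assms(4)[OF 1 ij(2)] by auto
  next
    case 2
    then show ?thesis by simp
  next
    case 3
    then show ?thesis using assms(4)[OF 3 ij(1)] by auto
  qed
qed

lemma pattern_le_refl: "pattern_le p p"
  unfolding pattern_le_def by (rule exI[of _ "{..<length p}"]) (simp add: order_iso_refl)

lemma pattern_le_trans:
  assumes "pattern_le p s" "pattern_le s r"
  shows "pattern_le p r"
proof -
  obtain I where I: "I \<subseteq> {..<length r}" "order_iso (nths r I) s"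
    using assms(2) pattern_le_def by auto
  obtain J where J: "order_iso (nths s J) p"
    using assms(1) pattern_le_def by auto
  define I' where "I' = {i \<in> I. \<exists>j \<in> J. card {i' \<in> I. i' < i} = j}"
  have "order_iso (nths r I') p"
    unfolding I'_def nths_nths[symmetric] using order_iso_nths[OF I(2)] J order_iso_trans by blast
  moreover have "I' \<subseteq> {..<length r}" using I(1) unfolding I'_def by auto
  ultimately show ?thesis unfolding pattern_le_def by blast
qed

lemma pattern_le_length_le: "pattern_le p r \<Longrightarrow> length p \<le> length r"
proof -
  assume "pattern_le p r"
  then obtain I where "order_iso (nths r I) p" unfolding pattern_le_def by auto
  then have "length p = card {i. i < length r \<and> i \<in> I}" by (simp add: order_iso_def length_nths)
  also have "\<dots> \<le> card {..<length r}" by (rule card_mono) auto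
  finally show ?thesis by simp
qed

lemma pattern_le_positions:
  assumes "pattern_le p r"
  obtains ps where "sorted_wrt (<) ps" "\<forall>x\<in>set ps. x < length r" "length ps = length p"
    "order_iso (map ((!) r) ps) p"
proof -
  obtain I where I: "order_iso (nths r I) p" using assms pattern_le_def by auto
  define ps where "ps = filter (\<lambda>i. i \<in> I) [0..<length r]"
  have "sorted_wrt (<) ps" unfolding ps_def by (rule sorted_wrt_filter) simp
  moreover have "\<forall>x\<in>set ps. x < length r" unfolding ps_def by auto
  moreover have "order_iso (map ((!) r) ps) p" using I unfolding nths_conv_map_filter ps_def .
  moreover from this have "length ps = length p" by (simp add: order_iso_def)
  ultimately show ?thesis using that by blast
qed

lemma perms_length: "xs \<in> perms n \<Longrightarrow> length xs = n"
  unfolding perms_def using distinct_card by fastforce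

lemma finite_perms: "finite (perms n)"
proof -
  have "perms n \<subseteq> {xs. set xs \<subseteq> {1..n} \<and> length xs = n}" using perms_length by (auto simp: perms_def)
  then show ?thesis using finite_lists_length_eq[of "{1..n}" n] finite_subset by blast
qed

lemma perms_nth_eq_card:
  assumes "xs \<in> perms n" "i < n"
  shows "xs ! i = card {j. j < n \<and> xs ! j \<le> xs ! i}"
proof -
  have d: "distinct xs" and s: "set xs = {1..n}" and len: "length xs = n"
    using assms(1) perms_length by (auto simp: perms_def)
  have "bij_betw ((!) xs) {j. j < n \<and> xs ! j \<le> xs ! i} {1..xs!i}"
  proof (rule bij_betwI')
    fix x y assume "x \<in> {j. j < n \<and> xs ! j \<le> xs ! i}" "y \<in> {j. j < n \<and> xs ! j \<le> xs ! i}"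
    then show "xs ! x = xs ! y \<longleftrightarrow> x = y" using d len nth_eq_iff_index_eq by auto
  next
    fix x assume "x \<in> {j. j < n \<and> xs ! j \<le> xs ! i}"
    then have "xs ! x \<in> set xs" "xs!x \<le> xs!i" using len by auto
    then show "xs ! x \<in> {1..xs ! i}" using s by auto
  next
    fix y assume y: "y \<in> {1..xs ! i}"
    have "xs ! i \<in> set xs" using len assms by auto
    then have "y \<in> set xs" using y s by auto
    then obtain x where "x < n" "xs ! x = y" using len by (auto simp: in_set_conv_nth)
    then show "\<exists>x\<in>{j. j < n \<and> xs ! j \<le> xs ! i}. y = xs ! x" using y by auto
  qed
  then show ?thesis by (simp add: bij_betw_same_card)
qed

lemma order_iso_perms_eq:
  assumes "xs \<in> perms n" "ys \<in> perms n" "order_iso xs ys"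
  shows "xs = ys"
proof (rule nth_equalityI)
  show "length xs = length ys" using assms by (simp add: perms_length)
  fix i assume "i < length xs"
  then have i: "i < n" using perms_length[OF assms(1)] by simp
  have "\<forall>j<n. xs!j \<le> xs!i \<longleftrightarrow> ys!j \<le> ys!i"
    using assms(3) perms_length[OF assms(1)] i unfolding order_iso_def by (auto simp: not_less[symmetric])
  then have "{j. j < n \<and> xs ! j \<le> xs ! i} = {j. j < n \<and> ys ! j \<le> ys ! i}" by auto
  then show "xs ! i = ys ! i" using perms_nth_eq_card[OF assms(1) i] perms_nth_eq_card[OF assms(2) i] by simp
qed

definition down_closure :: "nat list set \<Rightarrow> nat list set" where
  "down_closure A = {p \<in> allPerms. \<exists>\<sigma>\<in>A. pattern_le p \<sigma>}"

lemma closed_class_down_closure: "closed_class (down_closure A)"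
  unfolding closed_class_def down_closure_def using pattern_le_trans by blast

lemma down_closure_mono: "A \<subseteq> B \<Longrightarrow> down_closure A \<subseteq> down_closure B"
  unfolding down_closure_def by blast

lemma inj_down_closure_antichain:
  assumes "\<And>k. a k \<in> allPerms" and "\<And>j k. j \<noteq> k \<Longrightarrow> \<not> pattern_le (a j) (a k)"
  shows "inj (\<lambda>S. down_closure (a ` S))"
proof -
  have subset: "S \<subseteq> T" if eq: "down_closure (a ` S) = down_closure (a ` T)" for S T
  proof
    fix k assume "k \<in> S"
    then have "a k \<in> down_closure (a ` S)"
      using assms(1) pattern_le_refl unfolding down_closure_def by auto
    then have "a k \<in> down_closure (a ` T)" using eq by simp
    then obtain j where "j \<in> T" "pattern_le (a k) (a j)"
      unfolding down_closure_def by auto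
    with assms(2) show "k \<in> T" by (cases "j = k") auto
  qed
  show ?thesis
  proof (rule injI)
    fix S T assume "down_closure (a ` S) = down_closure (a ` T)"
    then show "S = T" using subset[of S T] subset[of T S] by auto
  qed
qed

lemma uncountable_nat_sets: "uncountable (UNIV :: nat set set)"
proof
  assume "countable (UNIV :: nat set set)"
  then obtain f :: "nat set \<Rightarrow> nat" where "inj f" by (auto simp: countable_def)
  then have "range (inv f) = Pow (UNIV :: nat set)" by (simp add: inj_imp_surj_inv)
  then show False using Cantors_theorem by blast
qed

lemma uncountable_K_of_family:
  fixes F :: "nat set \<Rightarrow> nat list set" and C \<beta> \<alpha> :: real
  assumes "inj F" and "\<And>S. closed_class (F S)" and "\<And>S. F S \<subseteq> Y"
    and "\<And>n. n \<ge> 1 \<Longrightarrow> card (Y \<inter> perms n) \<le> C * \<beta> ^ n" and "0 < \<beta>" "\<beta> < \<alpha>"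
  shows "uncountable (K \<alpha>)"
proof -
  have ratio: "\<alpha> / \<beta> > 1" using assms(5,6) by simp
  obtain N where N: "C < (\<alpha> / \<beta>) ^ N" using real_arch_pow[OF ratio] by blast
  have "card (F S \<inter> perms n) < \<alpha> ^ n" if "n > N" for S n
  proof -
    have "card (F S \<inter> perms n) \<le> card (Y \<inter> perms n)"
      using assms(3) finite_perms by (intro card_mono) auto
    also have "\<dots> \<le> C * \<beta> ^ n" using assms(4) that by simp
    also have "\<dots> < (\<alpha> / \<beta>) ^ n * \<beta> ^ n"
    proof (rule mult_strict_right_mono)
      show "C < (\<alpha> / \<beta>) ^ n"
        using N power_increasing[of N n "\<alpha> / \<beta>"] ratio that by linarith
    qed (use assms(5) in simp)
    also have "\<dots> = \<alpha> ^ n" using assms(5) by (simp add: power_divide)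
    finally show ?thesis by simp
  qed
  then have "range F \<subseteq> K \<alpha>" unfolding K_def using assms(2) by blast
  moreover have "uncountable (range F)"
    using uncountable_nat_sets countable_image_inj_on[OF _ assms(1)] by blast
  ultimately show ?thesis using countable_subset by blast
qed

section \<open>Oscillations form an antichain\<close>

definition osc_height :: "nat \<Rightarrow> nat \<Rightarrow> int" where
  "osc_height m q =
    (if q = 0 then 1 else if q \<le> 2 then 0
     else if q \<le> 2*m+1 then (if odd q then int q else int q - 2)
     else if q = 2*m+2 then 2*int m+1 else 2*int m)"

definition osc_entry :: "nat \<Rightarrow> nat \<Rightarrow> nat" where
  "osc_entry m q =
    (if q = 0 then 4 else if q = 1 then 1 else if q = 2 then 2
     else if q \<le> 2*m+1 then (if q = 2*m+1 then 2*m+3 else if odd q then q+3 else q-1)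
     else if q = 2*m+2 then 2*m+4 else 2*m+1)"

text \<open>For \<open>m \<ge> 2\<close> the permutation \<open>osc m\<close> has length \<open>2m+4\<close>, e.g.
  \<open>osc 3 = 4 1 2 6 3 8 5 9 10 7\<close>. Positions \<open>q < q'\<close> form an inversion iff their heights,
  here \<open>1 0 0 3 2 5 4 7 7 6\<close>, differ by one (\<open>osc_inversion_iff\<close>): the inversion graph is a
  path through the heights \<open>0..2m+1\<close>, forked at both ends.\<close>

definition osc :: "nat \<Rightarrow> nat list" where
  "osc m = map (osc_entry m) [0..<2*m+4]"

definition osc_adj :: "nat \<Rightarrow> nat \<Rightarrow> nat \<Rightarrow> bool" where
  "osc_adj m q q' \<longleftrightarrow> \<bar>osc_height m q - osc_height m q'\<bar> = 1"

lemma length_osc [simp]: "length (osc m) = 2*m+4"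
  by (simp add: osc_def)

lemma nth_osc [simp]: "q < 2*m+4 \<Longrightarrow> osc m ! q = osc_entry m q"
  by (simp add: osc_def)

lemma osc_cases:
  assumes "q < 2*m+4" "m \<ge> 2"
  obtains "q = 0" "osc_height m q = 1" "osc_entry m q = 4"
    | "q = 1" "osc_height m q = 0" "osc_entry m q = 1"
    | "q = 2" "osc_height m q = 0" "osc_entry m q = 2"
    | j where "q = 2*j+3" "q < 2*m+1" "osc_height m q = 2*int j+3" "osc_entry m q = 2*j+6"
    | j where "q = 2*j+4" "q \<le> 2*m" "osc_height m q = 2*int j+2" "osc_entry m q = 2*j+3"
    | "q = 2*m+1" "osc_height m q = 2*int m+1" "osc_entry m q = 2*m+3"
    | "q = 2*m+2" "osc_height m q = 2*int m+1" "osc_entry m q = 2*m+4"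
    | "q = 2*m+3" "osc_height m q = 2*int m" "osc_entry m q = 2*m+1"
proof -
  consider "q = 0" | "q = 1" | "q = 2" | "3 \<le> q" "q < 2*m+1" "odd q" | "3 \<le> q" "q < 2*m+1" "even q"
    | "q = 2*m+1" | "q = 2*m+2" | "q = 2*m+3"
    using assms(1) by linarith
  then show ?thesis
  proof cases
    case 1 then show ?thesis by (intro that(1)) (simp_all add: osc_height_def osc_entry_def)
  next
    case 2 then show ?thesis by (intro that(2)) (simp_all add: osc_height_def osc_entry_def)
  next
    case 3 then show ?thesis by (intro that(3)) (simp_all add: osc_height_def osc_entry_def)
  next
    case 4
    moreover have "q = 2*((q-3) div 2)+3" using 4 by presburger
    then obtain j where "q = 2*j+3" by blast
    ultimately show ?thesis by (intro that(4)[of j]) (auto simp: osc_height_def osc_entry_def)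
  next
    case 5
    moreover have "q = 2*((q-4) div 2)+4" using 5 by presburger
    then obtain j where "q = 2*j+4" by blast
    ultimately show ?thesis by (intro that(5)[of j]) (auto simp: osc_height_def osc_entry_def)
  next
    case 6 then show ?thesis using assms by (intro that(6)) (simp_all add: osc_height_def osc_entry_def)
  next
    case 7 then show ?thesis using assms by (intro that(7)) (simp_all add: osc_height_def osc_entry_def)
  next
    case 8 then show ?thesis using assms by (intro that(8)) (simp_all add: osc_height_def osc_entry_def)
  qed
qed

lemma osc_inversion_iff:
  assumes m: "m \<ge> 2" and "q < q'" "q' < 2*m+4"
  shows "osc_entry m q' < osc_entry m q \<longleftrightarrow> osc_adj m q q'"
proof -
  have q: "q < 2*m+4" using assms by simp
  show ?thesis unfolding osc_adj_def using assms
    by (cases rule: osc_cases[OF q m]; cases rule: osc_cases[OF assms(3) m]) (auto simp: abs_if, presburger+)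
qed

lemma osc_entry_surj:
  assumes m: "m \<ge> 2" and v: "v \<in> {1..2*m+4}"
  shows "v \<in> osc_entry m ` {0..<2*m+4}"
proof -
  have "v = 1 \<or> v = 2 \<or> v = 4 \<or> v = 2*m+1 \<or> v = 2*m+3 \<or> v = 2*m+4 \<or>
      (odd v \<and> 3 \<le> v \<and> v \<le> 2*m-1) \<or> (even v \<and> 6 \<le> v \<and> v \<le> 2*m+2)"
    using v m by simp presburger
  then consider "v = 1" | "v = 2" | "v = 4" | "v = 2*m+1" | "v = 2*m+3" | "v = 2*m+4"
    | "odd v" "3 \<le> v" "v \<le> 2*m-1" | "even v" "6 \<le> v" "v \<le> 2*m+2"
    by blast
  then have "\<exists>q<2*m+4. osc_entry m q = v"
  proof cases
    case 1 then show ?thesis by (intro exI[of _ 1]) (simp add: osc_entry_def)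
  next
    case 2 then show ?thesis by (intro exI[of _ 2]) (simp add: osc_entry_def)
  next
    case 3 then show ?thesis by (intro exI[of _ 0]) (simp add: osc_entry_def)
  next
    case 4 then show ?thesis using m by (intro exI[of _ "2*m+3"]) (simp add: osc_entry_def)
  next
    case 5 then show ?thesis using m by (intro exI[of _ "2*m+1"]) (simp add: osc_entry_def)
  next
    case 6 then show ?thesis using m by (intro exI[of _ "2*m+2"]) (simp add: osc_entry_def)
  next
    case 7 then show ?thesis using m by (intro exI[of _ "v+1"]) (auto simp add: osc_entry_def)
  next
    case 8 then show ?thesis using m by (intro exI[of _ "v-3"]) (auto simp add: osc_entry_def)
  qed
  then show ?thesis by force
qed

lemma osc_in_perms:
  assumes m: "m \<ge> 2"
  shows "osc m \<in> perms (2*m+4)"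
proof -
  have "osc_entry m q \<in> {1..2*m+4}" if "q < 2*m+4" for q
    using that m by (cases rule: osc_cases[OF that m]) auto
  then have image: "osc_entry m ` {0..<2*m+4} = {1..2*m+4}"
    using osc_entry_surj[OF m] by fastforce
  then have "inj_on (osc_entry m) {0..<2*m+4}"
    by (intro eq_card_imp_inj_on) auto
  then show ?thesis using image unfolding perms_def osc_def by (simp add: distinct_map)
qed

lemma osc_in_allPerms: "m \<ge> 2 \<Longrightarrow> osc m \<in> allPerms"
  using osc_in_perms by (auto simp: allPerms_def)

lemma osc_height_eq_cases:
  assumes "q < q'" "q' < 2*m+4" "osc_height m q = osc_height m q'" and m: "m \<ge> 2"
  shows "(q = 1 \<and> q' = 2) \<or> (q = 2*m+1 \<and> q' = 2*m+2)"
proof -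
  have "q < 2*m+4" using assms by simp
  then show ?thesis using assms
    by (cases rule: osc_cases[OF _ m]; cases rule: osc_cases[OF assms(2) m]) (auto, arith+)
qed

lemma osc_height_bounds:
  "q < 2*m+4 \<Longrightarrow> m \<ge> 2 \<Longrightarrow> 0 \<le> osc_height m q \<and> osc_height m q \<le> 2*int m+1 \<and> \<bar>osc_height m q - int q\<bar> \<le> 3"
  by (cases rule: osc_cases) auto

lemma osc_height_eq_1: "q < 2*m+4 \<Longrightarrow> m \<ge> 2 \<Longrightarrow> osc_height m q = 1 \<Longrightarrow> q = 0"
  by (cases rule: osc_cases) auto

lemma osc_height_eq_2m: "q < 2*m+4 \<Longrightarrow> m \<ge> 2 \<Longrightarrow> osc_height m q = 2*int m \<Longrightarrow> q = 2*m+3"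
  by (cases rule: osc_cases) (auto, arith)

lemma osc_height_middle:
  "3 \<le> q \<Longrightarrow> q \<le> 2*m+1 \<Longrightarrow> osc_height m q = (if odd q then int q else int q - 2)"
  unfolding osc_height_def by auto

lemma osc_height_surj:
  assumes "m \<ge> 2" "1 \<le> v" "v \<le> 2*m"
  shows "\<exists>q < 2*m+4. osc_height m q = int v"
proof -
  have "v = 1 \<or> v = 2*m \<or> (odd v \<and> 3 \<le> v \<and> v < 2*m) \<or> (even v \<and> 2 \<le> v \<and> v + 2 \<le> 2*m)"
    using assms by presburger
  then consider "v = 1" | "v = 2*m" | "odd v" "3 \<le> v" "v < 2*m" | "even v" "2 \<le> v" "v + 2 \<le> 2*m"
    by blast
  then show ?thesis
  proof cases
    case 1 then show ?thesis by (intro exI[of _ 0]) (simp add: osc_height_def)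
  next
    case 2 then show ?thesis using assms by (intro exI[of _ "2*m+3"]) (simp add: osc_height_def)
  next
    case 3 then show ?thesis by (intro exI[of _ v]) (simp add: osc_height_def)
  next
    case 4 then show ?thesis by (intro exI[of _ "v+2"]) (simp add: osc_height_def)
  qed
qed

lemma osc_adj_degree3_end:
  assumes m: "m \<ge> 2" and x: "x < 2*m+4" and y: "y1 < 2*m+4" "y2 < 2*m+4" "y3 < 2*m+4"
    and distinct: "y1 \<noteq> y2" "y1 \<noteq> y3" "y2 \<noteq> y3"
    and adj: "osc_adj m x y1" "osc_adj m x y2" "osc_adj m x y3"
  shows "x = 0 \<or> x = 2*m+3"
proof -
  have twin: "osc_height m a = 0 \<or> osc_height m a = 2*int m+1"
    if "a < 2*m+4" "b < 2*m+4" "a \<noteq> b" "osc_height m a = osc_height m b" for a b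
  proof (cases "a < b")
    case True then show ?thesis
      using osc_height_eq_cases[OF True that(2) that(4) m] osc_height_def by auto
  next
    case False
    then have "b < a" using that by simp
    then show ?thesis
      using osc_height_eq_cases[OF _ that(1) that(4)[symmetric] m] osc_height_def that(4) by auto
  qed
  have "osc_height m y1 = osc_height m y2 \<or> osc_height m y1 = osc_height m y3 \<or> osc_height m y2 = osc_height m y3"
    using adj unfolding osc_adj_def by arith
  then obtain a where a: "osc_height m a = 0 \<or> osc_height m a = 2*int m+1" "osc_adj m x a"
    using twin y distinct adj by blast
  moreover have "0 \<le> osc_height m x" "osc_height m x \<le> 2*int m+1"
    using osc_height_bounds[OF x m] by auto
  ultimately have "osc_height m x = 1 \<or> osc_height m x = 2*int m"
    unfolding osc_adj_def by arith
  then show ?thesis using osc_height_eq_1[OF x m] osc_height_eq_2m[OF x m] by auto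
qed

definition osc_embedding :: "nat \<Rightarrow> nat \<Rightarrow> (nat \<Rightarrow> nat) \<Rightarrow> bool" where
  "osc_embedding m m' f \<longleftrightarrow> (\<forall>s<2*m+4. f s < 2*m'+4) \<and> strict_mono_on {..<2*m+4} f \<and>
     (\<forall>s<2*m+4. \<forall>t<2*m+4. osc_adj m s t \<longleftrightarrow> osc_adj m' (f s) (f t))"

lemma osc_embeddingD:
  assumes "osc_embedding m m' f"
  shows "s < 2*m+4 \<Longrightarrow> f s < 2*m'+4"
    and "s < t \<Longrightarrow> t < 2*m+4 \<Longrightarrow> f s < f t"
    and "s < 2*m+4 \<Longrightarrow> t < 2*m+4 \<Longrightarrow> osc_adj m s t \<longleftrightarrow> osc_adj m' (f s) (f t)"
  using assms strict_mono_onD[of "{..<2*m+4}" f s t] unfolding osc_embedding_def by auto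

lemma osc_embedding_if_pattern_le:
  assumes m: "m \<ge> 2" and m': "m' \<ge> 2" and "pattern_le (osc m) (osc m')"
  obtains f where "osc_embedding m m' f"
proof -
  obtain ps where ps: "sorted_wrt (<) ps" "\<forall>x\<in>set ps. x < 2*m'+4" "length ps = 2*m+4"
    "order_iso (map ((!) (osc m')) ps) (osc m)"
    using assms(3) by (rule pattern_le_positions) auto
  define f where "f = (!) ps"
  have range: "f s < 2*m'+4" if "s < 2*m+4" for s
    using ps(2,3) that unfolding f_def by auto
  have mono: "strict_mono_on {..<2*m+4} f"
    using sorted_wrt_nth_less[OF ps(1)] ps(3) unfolding f_def by (auto intro: strict_mono_onI)
  have inv: "osc_entry m' (f t) < osc_entry m' (f s) \<longleftrightarrow> osc_entry m t < osc_entry m s"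
    if "s < 2*m+4" "t < 2*m+4" for s t
  proof -
    have "osc m' ! f t < osc m' ! f s \<longleftrightarrow> osc m ! t < osc m ! s"
      using ps(3,4) that unfolding order_iso_def f_def by auto
    then show ?thesis using range that by simp
  qed
  have adj: "osc_adj m s t \<longleftrightarrow> osc_adj m' (f s) (f t)" if "s < t" "t < 2*m+4" for s t
    using osc_inversion_iff[OF m that] inv[of s t] osc_inversion_iff[OF m' _ range[OF that(2)]]
      strict_mono_onD[OF mono, of s t] that by simp
  have "osc_adj m s t \<longleftrightarrow> osc_adj m' (f s) (f t)" if "s < 2*m+4" "t < 2*m+4" for s t
  proof -
    consider "s < t" | "s = t" | "t < s" by linarith
    then show ?thesis
      using adj[of s t] adj[of t s] that by cases (auto simp: osc_adj_def abs_minus_commute)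
  qed
  then show ?thesis using that range mono unfolding osc_embedding_def by blast
qed

lemma osc_embedding_first:
  assumes m: "m \<ge> 2" and m': "m' \<ge> 2" and f: "osc_embedding m m' f"
  shows "f 0 = 0"
proof -
  note range = osc_embeddingD(1)[OF f] and mono = osc_embeddingD(2)[OF f]
  have order: "f 0 < f 1" "f 1 < f 2" "f 2 < f 4" using m mono by auto
  have "osc_adj m 0 1" "osc_adj m 0 2" "osc_adj m 0 4"
    using m by (auto simp: osc_adj_def osc_height_def)
  then have adj: "osc_adj m' (f 0) (f 1)" "osc_adj m' (f 0) (f 2)" "osc_adj m' (f 0) (f 4)"
    using osc_embeddingD(3)[OF f] m by auto
  have "f 0 = 0 \<or> f 0 = 2*m'+3"
    by (rule osc_adj_degree3_end[OF m' range range range range _ _ _ adj]) (use m order in auto)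
  moreover have "f 1 < 2*m'+4" using range m by simp
  ultimately show ?thesis using \<open>f 0 < f 1\<close> by auto
qed

lemma osc_embedding_last:
  assumes m: "m \<ge> 2" and m': "m' \<ge> 2" and f: "osc_embedding m m' f"
  shows "f (2*m+3) = 2*m'+3"
proof -
  note range = osc_embeddingD(1)[OF f] and mono = osc_embeddingD(2)[OF f]
  have order: "f (2*m-1) < f (2*m+1)" "f (2*m+1) < f (2*m+2)" "f (2*m+2) < f (2*m+3)"
    "f 0 < f (2*m+3)"
    using m mono by auto
  have "osc_adj m (2*m+3) (2*m-1)" "osc_adj m (2*m+3) (2*m+1)" "osc_adj m (2*m+3) (2*m+2)"
    using m by (auto simp: osc_adj_def osc_height_def)
  then have adj: "osc_adj m' (f (2*m+3)) (f (2*m-1))" "osc_adj m' (f (2*m+3)) (f (2*m+1))"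
    "osc_adj m' (f (2*m+3)) (f (2*m+2))"
    using osc_embeddingD(3)[OF f] m by auto
  have "f (2*m+3) = 0 \<or> f (2*m+3) = 2*m'+3"
    by (rule osc_adj_degree3_end[OF m' range range range range _ _ _ adj]) (use m order in auto)
  then show ?thesis using order(4) by auto
qed

lemma osc_embedding_height_le:
  assumes m: "m \<ge> 2" and m': "m' \<ge> 2" and f: "osc_embedding m m' f"
  shows "1 \<le> v \<Longrightarrow> v \<le> 2*m \<Longrightarrow> q < 2*m+4 \<Longrightarrow> osc_height m q = int v \<Longrightarrow> osc_height m' (f q) \<le> int v"
proof (induction v arbitrary: q)
  case 0
  then show ?case by simp
next
  case (Suc v)
  show ?case
  proof (cases "v = 0")
    case True
    then have "q = 0" using osc_height_eq_1[OF Suc.prems(3) m] Suc.prems(4) by simp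
    then show ?thesis using osc_embedding_first[OF m m' f] by (simp add: osc_height_def)
  next
    case False
    obtain q' where q': "q' < 2*m+4" "osc_height m q' = int v"
      using osc_height_surj[OF m, of v] False Suc.prems by auto
    then have "osc_adj m q' q" using Suc.prems by (simp add: osc_adj_def)
    then have "osc_adj m' (f q') (f q)" using osc_embeddingD(3)[OF f q'(1) Suc.prems(3)] by simp
    moreover have "osc_height m' (f q') \<le> int v" using Suc.IH[OF _ _ q'] False Suc.prems by simp
    ultimately show ?thesis unfolding osc_adj_def by linarith
  qed
qed

lemma osc_not_pattern_le:
  assumes m: "2 \<le> m" and "m < m'"
  shows "\<not> pattern_le (osc m) (osc m')"
proof
  have m': "2 \<le> m'" using assms by simp
  assume "pattern_le (osc m) (osc m')"
  then obtain f where f: "osc_embedding m m' f" by (rule osc_embedding_if_pattern_le[OF m m'])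
  have "osc_height m' (f (2*m+3)) \<le> int (2*m)"
    using osc_embedding_height_le[OF m m' f, of "2*m" "2*m+3"] m by (simp add: osc_height_def)
  then show False using osc_embedding_last[OF m m' f] \<open>m < m'\<close> by (simp add: osc_height_def)
qed

lemma osc_antichain: "j \<noteq> k \<Longrightarrow> \<not> pattern_le (osc (j+2)) (osc (k+2))"
  using osc_not_pattern_le[of "j+2" "k+2"] pattern_le_length_le[of "osc (j+2)" "osc (k+2)"]
  by (cases "j < k") auto

section \<open>Coding graphs of unit height differences\<close>

definition unit_adj :: "int list \<Rightarrow> nat \<Rightarrow> nat \<Rightarrow> bool" where
  "unit_adj w s t \<longleftrightarrow> \<bar>w!t - w!s\<bar> = 1"

definition spanned :: "int list \<Rightarrow> nat \<Rightarrow> bool" where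
  "spanned w r \<longleftrightarrow> (\<exists>s t. s \<le> r \<and> r < t \<and> t < length w \<and> unit_adj w s t)"

definition lone :: "int list \<Rightarrow> nat \<Rightarrow> bool" where
  "lone w r \<longleftrightarrow> \<not> (0 < r \<and> spanned w (r-1)) \<and> \<not> spanned w (Suc r)"

text \<open>Gap \<open>r\<close> lies between positions \<open>r\<close> and \<open>r+1\<close>. A lone spanned gap can only be spanned by
  the pair \<open>(r, r+1)\<close>, so its sign carries no information and it is recorded as \<open>-1\<close>; any other
  spanned gap records the height difference across it, and these differences add up along runs.\<close>

definition gap_letter :: "int list \<Rightarrow> nat \<Rightarrow> int option" where
  "gap_letter w r =
    (if spanned w r then (if lone w r then Some (-1) else Some (w!(Suc r) - w!r)) else None)"

definition gap_code :: "int list \<Rightarrow> int option list" where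
  "gap_code w = map (gap_letter w) [0..<length w - 1]"

definition code_adj :: "int option list \<Rightarrow> nat \<Rightarrow> nat \<Rightarrow> bool" where
  "code_adj c s t \<longleftrightarrow> (\<forall>r\<in>{s..<t}. c!r \<noteq> None) \<and>
     (if t = Suc s then \<bar>the (c!s)\<bar> = 1 else \<bar>\<Sum>r\<in>{s..<t}. the (c!r)\<bar> = 1)"

lemma length_gap_code: "length (gap_code w) = length w - 1"
  by (simp add: gap_code_def)

lemma nth_gap_code: "r < length w - 1 \<Longrightarrow> gap_code w ! r = gap_letter w r"
  by (simp add: gap_code_def)

lemma spannedI: "s \<le> r \<Longrightarrow> r < t \<Longrightarrow> t < length w \<Longrightarrow> unit_adj w s t \<Longrightarrow> spanned w r"
  unfolding spanned_def by auto

lemma not_lone_in_long_run: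
  assumes "s \<le> r" "r < t" "Suc s < t" "\<forall>x\<in>{s..<t}. spanned w x"
  shows "\<not> lone w r"
proof (cases "Suc r < t")
  case True
  then show ?thesis using assms unfolding lone_def by auto
next
  case False
  then have "0 < r" "r - 1 \<in> {s..<t}" using assms by auto
  then show ?thesis using assms unfolding lone_def by auto
qed

lemma gap_code_sum_long_run:
  assumes "Suc s < t" "t < length w" "\<forall>r\<in>{s..<t}. spanned w r"
  shows "(\<Sum>r\<in>{s..<t}. the (gap_code w ! r)) = w!t - w!s"
proof -
  have "gap_code w ! r = Some (w!(Suc r) - w!r)" if "r \<in> {s..<t}" for r
    using that assms not_lone_in_long_run[OF _ _ assms(1,3), of r]
    by (auto simp: nth_gap_code gap_letter_def)
  then have "(\<Sum>r\<in>{s..<t}. the (gap_code w ! r)) = (\<Sum>r\<in>{s..<t}. w!(Suc r) - w!r)" by simp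
  also have "\<dots> = w!t - w!s" using assms by (simp add: sum_Suc_diff')
  finally show ?thesis .
qed

lemma code_adj_if_unit_adj:
  assumes st: "s < t" "t < length w" and adj: "unit_adj w s t"
  shows "code_adj (gap_code w) s t"
proof -
  have spanned: "\<forall>r\<in>{s..<t}. spanned w r" using st adj by (auto intro: spannedI)
  then have letters: "\<forall>r\<in>{s..<t}. gap_code w ! r \<noteq> None"
    using st by (auto simp: nth_gap_code gap_letter_def)
  show ?thesis
  proof (cases "t = Suc s")
    case True
    then have "gap_code w ! s = Some (-1) \<or> gap_code w ! s = Some (w!t - w!s)"
      using spanned st by (auto simp: nth_gap_code gap_letter_def)
    then show ?thesis using letters True adj unfolding code_adj_def unit_adj_def by auto
  next
    case False
    then show ?thesis
      using letters adj gap_code_sum_long_run[OF _ st(2) spanned] st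
      unfolding code_adj_def unit_adj_def by auto
  qed
qed

lemma unit_adj_if_lone_spanned:
  assumes "spanned w s" "lone w s"
  shows "unit_adj w s (Suc s)"
proof -
  obtain s' t' where w: "s' \<le> s" "s < t'" "t' < length w" "unit_adj w s' t'"
    using assms(1) spanned_def by auto
  have "s' = s"
  proof (rule ccontr)
    assume "s' \<noteq> s"
    then have "0 < s" "spanned w (s-1)" using w spannedI[of s' "s-1" t' w] by auto
    then show False using assms(2) unfolding lone_def by auto
  qed
  moreover have "t' = Suc s"
  proof (rule ccontr)
    assume "t' \<noteq> Suc s"
    then have "spanned w (Suc s)" using w spannedI[of s' "Suc s" t' w] by auto
    then show False using assms(2) unfolding lone_def by auto
  qed
  ultimately show ?thesis using w by simp
qed

lemma unit_adj_if_code_adj: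
  assumes st: "s < t" "t < length w" and adj: "code_adj (gap_code w) s t"
  shows "unit_adj w s t"
proof -
  have spanned: "\<forall>r\<in>{s..<t}. spanned w r"
  proof
    fix r assume r: "r \<in> {s..<t}"
    then have "gap_code w ! r \<noteq> None" using adj unfolding code_adj_def by blast
    moreover have "r < length w - 1" using r st by auto
    ultimately have "gap_letter w r \<noteq> None" by (simp add: nth_gap_code)
    then show "spanned w r" by (auto simp: gap_letter_def split: if_splits)
  qed
  show ?thesis
  proof (cases "t = Suc s")
    case True
    show ?thesis
    proof (cases "lone w s")
      case True
      then show ?thesis using unit_adj_if_lone_spanned spanned \<open>t = Suc s\<close> by simp
    next
      case False
      then have "gap_code w ! s = Some (w!t - w!s)"
        using spanned st \<open>t = Suc s\<close> by (auto simp: nth_gap_code gap_letter_def)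
      then show ?thesis using adj \<open>t = Suc s\<close> unfolding code_adj_def unit_adj_def by simp
    qed
  next
    case False
    then show ?thesis
      using adj gap_code_sum_long_run[OF _ st(2) spanned] st
      unfolding code_adj_def unit_adj_def by auto
  qed
qed

lemma unit_adj_eq_if_gap_code_eq:
  assumes "length w = length w'" "gap_code w = gap_code w'" "s < t" "t < length w"
  shows "unit_adj w s t \<longleftrightarrow> unit_adj w' s t"
  using assms code_adj_if_unit_adj unit_adj_if_code_adj by metis

section \<open>Codes of occurrences in oscillations\<close>

lemma sorted_wrt_less_nth_gap:
  assumes "sorted_wrt (<) (ps::nat list)" "s \<le> t" "t < length ps"
  shows "ps!s + (t - s) \<le> ps!t"
  using assms(2,3)
proof (induction t)
  case (Suc t)
  show ?case
  proof (cases "s = Suc t")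
    case False
    then have "s \<le> t" using Suc by simp
    then have "ps!s + (t - s) \<le> ps!t" using Suc by simp
    moreover have "ps!t < ps!(Suc t)" using sorted_wrt_nth_less[OF assms(1), of t "Suc t"] Suc by simp
    ultimately show ?thesis using \<open>s \<le> t\<close> by linarith
  qed simp
qed simp

lemma parity_cases:
  obtains i where "(k::nat) = 2*i" "even k" | i where "k = 2*i+1" "odd k"
  by (metis evenE oddE)

definition code_letters :: "int option set" where
  "code_letters = insert None (Some ` {-5..13})"

locale osc_positions =
  fixes m :: nat and ps :: "nat list"
  assumes m2: "m \<ge> 2" and sorted: "sorted_wrt (<) ps" and bound: "\<forall>x\<in>set ps. x < 2*m+4"
begin

abbreviation "n \<equiv> length ps"

definition heights :: "int list" where
  "heights = map (osc_height m) ps"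

abbreviation "step j \<equiv> heights!(Suc j) - heights!j"

lemma length_heights [simp]: "length heights = n"
  by (simp add: heights_def)

lemma nth_heights: "j < n \<Longrightarrow> heights!j = osc_height m (ps!j)"
  by (simp add: heights_def)

lemma nth_bound: "j < n \<Longrightarrow> ps!j < 2*m+4"
  using bound by auto

lemma nth_gap: "s \<le> t \<Longrightarrow> t < n \<Longrightarrow> ps!s + (t - s) \<le> ps!t"
  by (rule sorted_wrt_less_nth_gap[OF sorted])

lemma nth_less: "s < t \<Longrightarrow> t < n \<Longrightarrow> ps!s < ps!t"
  using sorted_wrt_nth_less[OF sorted] by auto

lemma unit_adj_span:
  assumes "s < t" "t < n" "unit_adj heights s t"
  shows "ps!t \<le> ps!s + 7" "t \<le> s + 7"
proof -
  have "\<bar>osc_height m (ps!t) - osc_height m (ps!s)\<bar> = 1"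
    using assms by (simp add: unit_adj_def nth_heights)
  moreover have "\<bar>osc_height m (ps!t) - int (ps!t)\<bar> \<le> 3" "\<bar>osc_height m (ps!s) - int (ps!s)\<bar> \<le> 3"
    using osc_height_bounds[OF nth_bound m2] assms by auto
  ultimately show span: "ps!t \<le> ps!s + 7" by linarith
  show "t \<le> s + 7" using nth_gap[of s t] assms span by linarith
qed

lemma gap_code_letters: "set (gap_code heights) \<subseteq> code_letters"
proof
  fix x assume "x \<in> set (gap_code heights)"
  then obtain r where r: "r < n - 1" "x = gap_letter heights r" by (auto simp: gap_code_def)
  show "x \<in> code_letters"
  proof (cases "spanned heights r \<and> \<not> lone heights r")
    case True
    then obtain s t where st: "s \<le> r" "r < t" "t < n" "unit_adj heights s t"
      unfolding spanned_def by auto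
    have "ps!t \<le> ps!s + 7" using unit_adj_span[of s t] st by auto
    moreover have "ps!s \<le> ps!r" "ps!(Suc r) \<le> ps!t" "ps!r < ps!(Suc r)"
      using nth_gap[of s r] nth_gap[of "Suc r" t] nth_less[of r "Suc r"] st by auto
    moreover have "\<bar>osc_height m (ps!r) - int (ps!r)\<bar> \<le> 3"
      "\<bar>osc_height m (ps!Suc r) - int (ps!Suc r)\<bar> \<le> 3"
      using osc_height_bounds[OF nth_bound m2] st by auto
    ultimately have "-5 \<le> step r" "step r \<le> 13" using st by (simp_all add: nth_heights)
    then show ?thesis using r True by (auto simp: gap_letter_def code_letters_def)
  next
    case False
    then show ?thesis using r by (auto simp: gap_letter_def code_letters_def)
  qed
qed

lemma gap_letter_minus_oneI: "Suc j < n \<Longrightarrow> step j = -1 \<Longrightarrow> gap_letter heights j = Some (-1)"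
  by (auto simp: gap_letter_def unit_adj_def intro: spannedI[of j j "Suc j"])

lemma gap_letter_SomeD:
  "gap_letter heights x = Some v \<Longrightarrow> v \<noteq> -1 \<Longrightarrow> spanned heights x \<and> \<not> lone heights x \<and> step x = v"
  by (auto simp: gap_letter_def split: if_splits)

lemma gap_letter_minus_oneD:
  "gap_letter heights x = Some (-1) \<Longrightarrow> spanned heights x \<and> (lone heights x \<or> step x = -1)"
  by (auto simp: gap_letter_def split: if_splits)

end

definition inner_letters :: "int option set" where
  "inner_letters = {None, Some (-1), Some 2, Some 3}"

definition admissible :: "int option \<Rightarrow> int option \<Rightarrow> int option \<Rightarrow> bool" where
  "admissible a b c \<longleftrightarrow> b \<in> inner_letters \<and> \<not> (b = Some (-1) \<and> c = Some (-1)) \<and>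
     \<not> (a = Some (-1) \<and> b = Some 2 \<and> c = Some (-1)) \<and>
     (b = Some 2 \<longrightarrow> a = Some (-1) \<or> c = Some (-1)) \<and>
     (b = Some 3 \<longrightarrow> a = Some (-1) \<and> c = Some (-1))"

text \<open>The bounds on \<open>r\<close> keep every position \<open>ps!j\<close> with \<open>in_window j\<close> in the range \<open>3..2m+1\<close>,
  where the height of \<open>q\<close> is \<open>q\<close> for odd \<open>q\<close> and \<open>q - 2\<close> for even \<open>q\<close>.\<close>

locale osc_window = osc_positions +
  fixes r :: nat
  assumes r_ge: "12 \<le> r" and r_le: "r + 13 \<le> n"
begin

definition in_window :: "nat \<Rightarrow> bool" where
  "in_window j \<longleftrightarrow> r - 8 \<le> j \<and> j \<le> r + 9"

lemma in_window_less: "in_window j \<Longrightarrow> j < n"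
  using r_le by (simp add: in_window_def)

lemma in_window_middle:
  assumes "in_window j"
  shows "3 \<le> ps!j" "ps!j \<le> 2*m+1"
proof -
  have "ps!0 + j \<le> ps!j" using nth_gap[of 0 j] in_window_less[OF assms] by simp
  then show "3 \<le> ps!j" using assms r_ge unfolding in_window_def by arith
  have "ps!j + (n - 1 - j) \<le> ps!(n-1)" using nth_gap[of j "n-1"] in_window_less[OF assms] by simp
  moreover have "ps!(n-1) < 2*m+4" using nth_bound[of "n-1"] r_le by simp
  ultimately show "ps!j \<le> 2*m+1" using assms r_le unfolding in_window_def by arith
qed

lemma heights_in_window:
  "in_window j \<Longrightarrow> heights!j = int (ps!j) - (if even (ps!j) then 2 else 0)"
  using osc_height_middle[OF in_window_middle] in_window_less by (auto simp: nth_heights)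

lemma in_window_around:
  "r - 2 \<le> x \<Longrightarrow> x \<le> r + 2 \<Longrightarrow>
    in_window (x - 1) \<and> in_window x \<and> in_window (Suc x) \<and> in_window (x+2) \<and> in_window (x+3) \<and> x > 0"
  using r_ge unfolding in_window_def by auto

lemma window_unit_adj_iff:
  assumes "s < t" "in_window s" "in_window t"
  shows "unit_adj heights s t \<longleftrightarrow> odd (ps!s) \<and> even (ps!t) \<and> (ps!t = ps!s + 1 \<or> ps!t = ps!s + 3)"
proof -
  have "ps!s < ps!t" using nth_less[OF assms(1) in_window_less[OF assms(3)]] .
  then show ?thesis unfolding unit_adj_def heights_in_window[OF assms(2)] heights_in_window[OF assms(3)]
    by (cases "ps!s" rule: parity_cases; cases "ps!t" rule: parity_cases; simp; arith)
qed

lemma window_spannedE: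
  assumes "spanned heights x" "r - 2 \<le> x" "x \<le> r + 2"
  obtains s t where "s \<le> x" "x < t" "t < n" "unit_adj heights s t" "in_window s" "in_window t"
proof -
  obtain s t where st: "s \<le> x" "x < t" "t < n" "unit_adj heights s t"
    using assms(1) spanned_def by auto
  have "t \<le> s + 7" using unit_adj_span(2)[of s t] st by auto
  then have "in_window s" "in_window t" using st assms r_ge unfolding in_window_def by auto
  then show ?thesis using that st by blast
qed

lemma window_unit_adj_cases:
  assumes "s < t" "in_window s" "in_window t" "unit_adj heights s t"
  shows "(t = s+1 \<and> (step s = -1 \<or> (step s = 1 \<and> odd (ps!s) \<and> ps!(s+1) = ps!s + 3))) \<or>
         (t = s+2 \<and> ((step s = -1 \<and> step (s+1) = 2) \<or> (step s = 2 \<and> step (s+1) = -1))) \<or>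
         (t = s+3 \<and> step s = -1 \<and> step (s+1) = 3 \<and> step (s+2) = -1)"
proof -
  have parity: "odd (ps!s)" "even (ps!t)" "ps!t = ps!s + 1 \<or> ps!t = ps!s + 3"
    using window_unit_adj_iff assms by auto
  have gap: "ps!s + (t - s) \<le> ps!t" using nth_gap[of s t] assms in_window_less by auto
  have between: "in_window j" if "s \<le> j" "j \<le> t" for j
    using assms(2,3) that unfolding in_window_def by auto
  obtain i where i: "ps!s = 2*i+1" using parity(1) oddE by blast
  consider "t = s+1" | "t = s+2" | "t = s+3" using parity(3) gap assms(1) by linarith
  then show ?thesis
  proof cases
    case 1
    then show ?thesis using parity i heights_in_window[OF assms(2)] heights_in_window[OF assms(3)] by auto
  next
    case 2
    have "ps!s < ps!(s+1)" "ps!(s+1) < ps!t"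
      using nth_less[of s "s+1"] nth_less[of "s+1" t] 2 in_window_less[OF assms(3)] by auto
    moreover have "ps!t = ps!s + 3" using parity(3) 2 gap by auto
    ultimately have "ps!(s+1) = 2*i+2 \<or> ps!(s+1) = 2*i+3" using i by auto
    then show ?thesis using 2 i \<open>ps!t = ps!s + 3\<close> heights_in_window[OF assms(2)]
        heights_in_window[OF assms(3)] heights_in_window[OF between[of "s+1"]] by auto
  next
    case 3
    have "ps!s < ps!(s+1)" "ps!(s+1) < ps!(s+2)" "ps!(s+2) < ps!t"
      using nth_less[of s "s+1"] nth_less[of "s+1" "s+2"] nth_less[of "s+2" t] 3
        in_window_less[OF assms(3)] by auto
    moreover have "ps!t = ps!s + 3" using parity(3) 3 gap by auto
    ultimately have "ps!(s+1) = 2*i+2" "ps!(s+2) = 2*i+3" using i by auto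
    then show ?thesis using 3 i \<open>ps!t = ps!s + 3\<close> heights_in_window[OF assms(2)]
        heights_in_window[OF assms(3)] heights_in_window[OF between[of "s+1"]]
        heights_in_window[OF between[of "s+2"]]
      by (auto simp: numeral_3_eq_3)
  qed
qed

lemma window_step_minus_one:
  assumes "in_window j" "in_window (Suc j)" "step j = -1"
  shows "odd (ps!j) \<and> ps!(Suc j) = ps!j + 1"
proof -
  have "ps!j < ps!(Suc j)" using nth_less[of j "Suc j"] in_window_less[OF assms(2)] by simp
  then show ?thesis
    using assms(3) unfolding heights_in_window[OF assms(1)] heights_in_window[OF assms(2)]
    by (cases "ps!j" rule: parity_cases; cases "ps!(Suc j)" rule: parity_cases; simp; arith)
qed

lemma window_lone_if_jump:
  assumes x: "r - 1 \<le> x" "x \<le> r + 1" and jump: "odd (ps!x)" "ps!(Suc x) = ps!x + 3"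
  shows "lone heights x"
proof -
  have window: "in_window (x - 1)" "in_window x" "in_window (Suc x)" "in_window (x+2)" "0 < x"
    using in_window_around[of x] x by auto
  have n: "x + 2 < n" using in_window_less[OF window(4)] .
  have "\<not> spanned heights (Suc x)"
  proof
    assume "spanned heights (Suc x)"
    then obtain s t where st: "s \<le> Suc x" "Suc x < t" "t < n" "unit_adj heights s t"
      "in_window s" "in_window t"
      by (rule window_spannedE) (use x in auto)
    have "odd (ps!s)" "ps!t \<le> ps!s + 3" using window_unit_adj_iff[of s t] st by auto
    moreover have "s \<le> x" using st \<open>odd (ps!s)\<close> jump by (cases "s = Suc x") auto
    then have "ps!s \<le> ps!x" using nth_gap[of s x] n by simp
    moreover have "ps!(x+2) \<le> ps!t" using nth_gap[of "x+2" t] st by simp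
    moreover have "ps!(Suc x) < ps!(x+2)" using nth_less[of "Suc x" "x+2"] n by simp
    ultimately show False using jump by simp
  qed
  moreover have "\<not> spanned heights (x - 1)"
  proof
    assume "spanned heights (x - 1)"
    then obtain s t where st: "s \<le> x - 1" "x - 1 < t" "t < n" "unit_adj heights s t"
      "in_window s" "in_window t"
      by (rule window_spannedE) (use x in auto)
    have "even (ps!t)" "ps!t \<le> ps!s + 3" using window_unit_adj_iff[of s t] st window by auto
    moreover have "Suc x \<le> t" using st \<open>even (ps!t)\<close> jump by (cases "t = x") auto
    then have "ps!(Suc x) \<le> ps!t" using nth_gap[of "Suc x" t] st by simp
    moreover have "ps!s \<le> ps!(x-1)" using nth_gap[of s "x-1"] st n by simp
    moreover have "ps!(x-1) < ps!x" using nth_less[of "x-1" x] n window by simp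
    ultimately show False using jump by simp
  qed
  ultimately show ?thesis unfolding lone_def by auto
qed

lemma window_not_lone:
  "s \<le> x \<Longrightarrow> x < t \<Longrightarrow> Suc s < t \<Longrightarrow> t < n \<Longrightarrow> unit_adj heights s t \<Longrightarrow> \<not> lone heights x"
  by (rule not_lone_in_long_run) (auto intro: spannedI)

lemma window_spanned_shape:
  assumes "spanned heights r"
  shows "step r = -1 \<or> (odd (ps!r) \<and> ps!(Suc r) = ps!r + 3) \<or>
    (\<not> lone heights r \<and> step r = 2 \<and> (step (r-1) = -1 \<or> step (Suc r) = -1)) \<or>
    (\<not> lone heights r \<and> step r = 3 \<and> step (r-1) = -1 \<and> step (Suc r) = -1)"
proof -
  obtain s t where st: "s \<le> r" "r < t" "t < n" "unit_adj heights s t" "in_window s" "in_window t"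
    using window_spannedE[OF assms] by auto
  have "s < t" using st by simp
  from window_unit_adj_cases[OF this st(5,6,4)] show ?thesis
  proof (elim disjE conjE)
    assume "t = s + 1" "step s = -1"
    moreover from this have "r = s" using st by simp
    ultimately show ?thesis by simp
  next
    assume "t = s + 1" "odd (ps!s)" "ps!(s+1) = ps!s + 3"
    moreover from this have "r = s" using st by simp
    ultimately show ?thesis by simp
  next
    assume "t = s + 2" "step s = -1" "step (s+1) = 2"
    moreover from this have "r = s \<or> r = s + 1" using st by auto
    ultimately show ?thesis using window_not_lone[of s r t] st by auto
  next
    assume "t = s + 2" "step s = 2" "step (s+1) = -1"
    moreover from this have "r = s \<or> r = s + 1" using st by auto
    ultimately show ?thesis using window_not_lone[of s r t] st by auto
  next
    assume "t = s + 3" "step s = -1" "step (s+1) = 3" "step (s+2) = -1"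
    moreover from this have "r = s \<or> r = s + 1 \<or> r = s + 2" using st by auto
    ultimately show ?thesis using window_not_lone[of s r t] st by (auto simp: numeral_2_eq_2)
  qed
qed

lemma window_letter_inner: "gap_letter heights r \<in> inner_letters"
proof (cases "spanned heights r")
  case False
  then show ?thesis by (simp add: gap_letter_def inner_letters_def)
next
  case True
  have "r + 2 < n" using in_window_around[of r] in_window_less by auto
  then have "gap_letter heights r = Some (-1)" if "step r = -1"
    using that gap_letter_minus_oneI[of r] by simp
  moreover have "lone heights r" if "odd (ps!r)" "ps!(Suc r) = ps!r + 3"
    using that window_lone_if_jump[of r] by simp
  ultimately show ?thesis using window_spanned_shape[OF True] True
    by (auto simp: gap_letter_def inner_letters_def)
qed

lemma window_letters_not_two_minus_one:
  "\<not> (gap_letter heights r = Some (-1) \<and> gap_letter heights (Suc r) = Some (-1))"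
proof
  assume letters: "gap_letter heights r = Some (-1) \<and> gap_letter heights (Suc r) = Some (-1)"
  have window: "in_window r" "in_window (Suc r)" "in_window (Suc (Suc r))"
    using in_window_around[of r] by auto
  have "spanned heights r" "lone heights r \<or> step r = -1"
    "spanned heights (Suc r)" "lone heights (Suc r) \<or> step (Suc r) = -1"
    using gap_letter_minus_oneD letters by auto
  then have "step r = -1" "step (Suc r) = -1" unfolding lone_def by auto
  then have "ps!(Suc r) = ps!r + 1" "odd (ps!r)" "odd (ps!(Suc r))"
    using window_step_minus_one[OF window(1,2)] window_step_minus_one[OF window(2,3)] by auto
  then show False by simp
qed

lemma window_letters_not_minus_one_two_minus_one:
  "\<not> (gap_letter heights (r-1) = Some (-1) \<and> gap_letter heights r = Some 2 \<and>
      gap_letter heights (Suc r) = Some (-1))"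
proof
  assume letters: "gap_letter heights (r-1) = Some (-1) \<and> gap_letter heights r = Some 2 \<and>
      gap_letter heights (Suc r) = Some (-1)"
  have window: "in_window (r-1)" "in_window r" "in_window (Suc r)" "in_window (Suc (Suc r))"
    using in_window_around[of r] by auto
  have r: "Suc (r - 1) = r" using r_ge by simp
  have two: "spanned heights r" "step r = 2" using gap_letter_SomeD[of r 2] letters by auto
  have "lone heights (r-1) \<or> step (r-1) = -1" using gap_letter_minus_oneD letters by auto
  then have "step (r-1) = -1" using two r unfolding lone_def by auto
  then have left: "odd (ps!(r-1)) \<and> ps!r = ps!(r-1) + 1"
    using window_step_minus_one[OF window(1)] window(2) r by auto
  have "lone heights (Suc r) \<or> step (Suc r) = -1" using gap_letter_minus_oneD letters by auto
  then have "step (Suc r) = -1" using two unfolding lone_def by auto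
  then have right: "odd (ps!(Suc r))" using window_step_minus_one[OF window(3,4)] by auto
  have "ps!r < ps!(Suc r)" using nth_less[of r "Suc r"] in_window_less[OF window(4)] by simp
  then show False
    using two(2) left right unfolding heights_in_window[OF window(2)] heights_in_window[OF window(3)]
    by auto
qed

lemma window_letter_two:
  assumes "gap_letter heights r = Some 2"
  shows "gap_letter heights (r-1) = Some (-1) \<or> gap_letter heights (Suc r) = Some (-1)"
proof -
  have two: "spanned heights r" "\<not> lone heights r" "step r = 2"
    using gap_letter_SomeD[of r 2] assms by auto
  have "r + 2 < n" and r: "Suc (r - 1) = r"
    using in_window_around[of r] in_window_less r_ge by auto
  then show ?thesis
    using window_spanned_shape[OF two(1)] two window_lone_if_jump[of r]
      gap_letter_minus_oneI[of "r-1"] gap_letter_minus_oneI[of "Suc r"] by auto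
qed

lemma window_letter_three:
  assumes "gap_letter heights r = Some 3"
  shows "gap_letter heights (r-1) = Some (-1) \<and> gap_letter heights (Suc r) = Some (-1)"
proof -
  have three: "spanned heights r" "\<not> lone heights r" "step r = 3"
    using gap_letter_SomeD[of r 3] assms by auto
  have "r + 2 < n" and r: "Suc (r - 1) = r"
    using in_window_around[of r] in_window_less r_ge by auto
  then show ?thesis
    using window_spanned_shape[OF three(1)] three window_lone_if_jump[of r]
      gap_letter_minus_oneI[of "r-1"] gap_letter_minus_oneI[of "Suc r"] by auto
qed

lemma window_admissible:
  "admissible (gap_code heights ! (r-1)) (gap_code heights ! r) (gap_code heights ! (r+1))"
proof -
  have "r + 2 < n" using in_window_around[of r] in_window_less by auto
  then have "gap_code heights ! (r-1) = gap_letter heights (r-1)"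
    "gap_code heights ! r = gap_letter heights r"
    "gap_code heights ! (r+1) = gap_letter heights (Suc r)"
    using r_ge by (auto simp: nth_gap_code)
  then show ?thesis unfolding admissible_def
    using window_letter_inner window_letters_not_two_minus_one
      window_letters_not_minus_one_two_minus_one window_letter_two window_letter_three
    by simp
qed

end

section \<open>Counting codes\<close>

definition admissible_words :: "nat \<Rightarrow> int option list set" where
  "admissible_words L = {v. length v = L \<and> set v \<subseteq> inner_letters \<and>
     (\<forall>i. 0 < i \<longrightarrow> Suc i < L \<longrightarrow> admissible (v!(i-1)) (v!i) (v!(Suc i)))}"

definition admissible_words_from :: "nat \<Rightarrow> int option \<Rightarrow> int option \<Rightarrow> int option list set" where
  "admissible_words_from L a b = {v \<in> admissible_words (L+2). v!0 = a \<and> v!1 = b}"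

text \<open>A positive sub-eigenvector, for the eigenvalue \<open>2.3\<close>, of the transfer matrix of admissible
  triples (\<open>weight_step\<close>); it bounds the growth rate of admissible words by \<open>2.3\<close>.\<close>

definition weight :: "int option \<Rightarrow> int option \<Rightarrow> real" where
  "weight a b =
    (if b = None then 122 else if b = Some (-1) then 107
     else if b = Some 2 then (if a = Some (-1) then 75 else 48)
     else if b = Some 3 then (if a = Some (-1) then 48 else 1) else 1)"

lemma finite_inner_letters: "finite inner_letters"
  by (simp add: inner_letters_def)

lemma weight_bounds: "1 \<le> weight a b" "weight a b \<le> 122"
  by (simp_all add: weight_def)

lemma weight_step:
  assumes "a \<in> inner_letters" "b \<in> inner_letters"
  shows "(\<Sum>c\<in>inner_letters. if admissible a b c then weight b c else 0) \<le> 23/10 * weight a b"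
proof -
  have "(\<Sum>c\<in>inner_letters. f c) = f None + f (Some (-1)) + f (Some 2) + f (Some 3)" for f :: "_ \<Rightarrow> real"
    unfolding inner_letters_def by (simp add: add.assoc)
  then show ?thesis
    using assms unfolding inner_letters_def by (elim insertE; simp add: admissible_def inner_letters_def weight_def)
qed

lemma finite_admissible_words: "finite (admissible_words L)"
proof -
  have "admissible_words L \<subseteq> {xs. set xs \<subseteq> inner_letters \<and> length xs = L}"
    by (auto simp: admissible_words_def)
  then show ?thesis using finite_lists_length_eq[OF finite_inner_letters] finite_subset by blast
qed

lemma admissible_words_from_Suc:
  "admissible_words_from (Suc L) a b \<subseteq>
    (\<lambda>v. a # v) ` (\<Union>c\<in>inner_letters. if admissible a b c then admissible_words_from L b c else {})"
proof
  fix v assume v: "v \<in> admissible_words_from (Suc L) a b"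
  then have len: "length v = L + 3" and letters: "set v \<subseteq> inner_letters" and v01: "v!0 = a" "v!1 = b"
    and adm: "\<forall>i. 0 < i \<longrightarrow> Suc i < L+3 \<longrightarrow> admissible (v!(i-1)) (v!i) (v!(Suc i))"
    by (auto simp: admissible_words_from_def admissible_words_def)
  obtain u where u: "v = a # u" using len v01 by (cases v) auto
  have "u \<in> admissible_words_from L b (v!2)"
    unfolding admissible_words_from_def admissible_words_def
  proof (intro CollectI conjI allI impI)
    show "length u = L + 2" using len u by simp
    show "set u \<subseteq> inner_letters" using letters u by auto
    show "u!0 = b" using v01 u by simp
    show "u!1 = v!2" using u by (simp add: numeral_2_eq_2)
    fix i assume "0 < i" "Suc i < L + 2"
    then show "admissible (u!(i-1)) (u!i) (u!Suc i)" using adm[rule_format, of "Suc i"] u by (cases i) auto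
  qed
  moreover have "v!2 \<in> inner_letters" using letters len by (auto simp: subset_iff)
  moreover have "admissible a b (v!2)" using adm[rule_format, of 1] v01 by (simp add: numeral_2_eq_2)
  ultimately have "u \<in> (\<Union>c\<in>inner_letters. if admissible a b c then admissible_words_from L b c else {})"
    by (intro UN_I[of "v!2"]) auto
  then show "v \<in> (\<lambda>v. a # v) ` (\<Union>c\<in>inner_letters. if admissible a b c then admissible_words_from L b c else {})"
    unfolding u by (rule imageI)
qed

lemma finite_admissible_words_from: "finite (admissible_words_from L a b)"
  using finite_admissible_words[of "L+2"] by (simp add: admissible_words_from_def)

lemma card_admissible_words_from:
  "a \<in> inner_letters \<Longrightarrow> b \<in> inner_letters \<Longrightarrow> card (admissible_words_from L a b) \<le> weight a b * (23/10)^L"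
proof (induction L arbitrary: a b)
  case 0
  have "admissible_words_from 0 a b \<subseteq> {[a,b]}"
  proof
    fix v assume "v \<in> admissible_words_from 0 a b"
    then have "length v = 2" "v!0 = a" "v!1 = b" by (auto simp: admissible_words_from_def admissible_words_def)
    then show "v \<in> {[a,b]}" by (cases v; cases "tl v") auto
  qed
  then have "card (admissible_words_from 0 a b) \<le> card {[a,b]}" by (intro card_mono) auto
  then show ?case using weight_bounds(1)[of a b] by simp
next
  case (Suc L)
  define U where "U c = (if admissible a b c then admissible_words_from L b c else {})" for c
  have finite_U: "finite (\<Union>c\<in>inner_letters. U c)"
    by (intro finite_UN_I finite_inner_letters) (simp add: U_def finite_admissible_words_from)
  have "admissible_words_from (Suc L) a b \<subseteq> (\<lambda>v. a # v) ` (\<Union>c\<in>inner_letters. U c)"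
    using admissible_words_from_Suc unfolding U_def .
  then have "card (admissible_words_from (Suc L) a b) \<le> card ((\<lambda>v. a # v) ` (\<Union>c\<in>inner_letters. U c))"
    by (rule card_mono[OF finite_imageI[OF finite_U]])
  also have "\<dots> \<le> card (\<Union>c\<in>inner_letters. U c)" by (rule card_image_le[OF finite_U])
  also have "\<dots> \<le> (\<Sum>c\<in>inner_letters. card (U c))" by (rule card_UN_le[OF finite_inner_letters])
  finally have "real (card (admissible_words_from (Suc L) a b)) \<le> real (\<Sum>c\<in>inner_letters. card (U c))"
    by (rule of_nat_mono)
  also have "\<dots> = (\<Sum>c\<in>inner_letters. real (card (U c)))"
    by simp
  also have "\<dots> \<le> (\<Sum>c\<in>inner_letters. (if admissible a b c then weight b c else 0) * (23/10)^L)"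
  proof (rule sum_mono)
    fix c assume "c \<in> inner_letters"
    then show "real (card (U c)) \<le> (if admissible a b c then weight b c else 0) * (23/10)^L"
      using Suc.IH[of b c] Suc.prems unfolding U_def by auto
  qed
  also have "\<dots> = (\<Sum>c\<in>inner_letters. if admissible a b c then weight b c else 0) * (23/10)^L"
    by (simp add: sum_distrib_right)
  also have "\<dots> \<le> 23/10 * weight a b * (23/10)^L"
    using weight_step[OF Suc.prems] by (intro mult_right_mono) auto
  finally show ?case by simp
qed

lemma card_admissible_words: "card (admissible_words (L+2)) \<le> 2000 * (23/10)^L"
proof -
  let ?U = "\<lambda>a. \<Union>b\<in>inner_letters. admissible_words_from L a b"
  have "admissible_words (L+2) \<subseteq> (\<Union>a\<in>inner_letters. ?U a)"
  proof
    fix v assume v: "v \<in> admissible_words (L+2)"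
    then have "v!0 \<in> inner_letters" "v!1 \<in> inner_letters"
      by (auto simp: admissible_words_def subset_iff)
    then show "v \<in> (\<Union>a\<in>inner_letters. ?U a)"
      using v by (auto simp: admissible_words_from_def)
  qed
  moreover have "finite (\<Union>a\<in>inner_letters. ?U a)"
    by (intro finite_UN_I finite_inner_letters finite_admissible_words_from)
  ultimately have "card (admissible_words (L+2)) \<le> card (\<Union>a\<in>inner_letters. ?U a)"
    by (rule card_mono[rotated])
  also have "\<dots> \<le> (\<Sum>a\<in>inner_letters. card (?U a))"
    by (rule card_UN_le[OF finite_inner_letters])
  also have "\<dots> \<le> (\<Sum>a\<in>inner_letters. \<Sum>b\<in>inner_letters. card (admissible_words_from L a b))"
    by (intro sum_mono card_UN_le[OF finite_inner_letters])
  finally have "real (card (admissible_words (L+2))) \<le>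
      real (\<Sum>a\<in>inner_letters. \<Sum>b\<in>inner_letters. card (admissible_words_from L a b))"
    by (rule of_nat_mono)
  also have "\<dots> = (\<Sum>a\<in>inner_letters. \<Sum>b\<in>inner_letters. real (card (admissible_words_from L a b)))"
    by simp
  also have "\<dots> \<le> (\<Sum>a\<in>inner_letters. \<Sum>b\<in>inner_letters. 122 * (23/10)^L)"
  proof (intro sum_mono)
    fix a b assume "a \<in> inner_letters" "b \<in> inner_letters"
    then have "card (admissible_words_from L a b) \<le> weight a b * (23/10)^L"
      by (rule card_admissible_words_from)
    also have "\<dots> \<le> 122 * (23/10)^L" by (rule mult_right_mono[OF weight_bounds(2)]) simp
    finally show "card (admissible_words_from L a b) \<le> 122 * (23/10)^L" .
  qed
  also have "\<dots> \<le> 2000 * (23/10)^L" by (simp add: inner_letters_def)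
  finally show ?thesis .
qed

definition osc_codes :: "nat \<Rightarrow> int option list set" where
  "osc_codes L = {c. length c = L \<and> set c \<subseteq> code_letters \<and>
     (\<forall>r. 12 \<le> r \<longrightarrow> r + 12 \<le> L \<longrightarrow> admissible (c!(r-1)) (c!r) (c!(Suc r)))}"

lemma finite_code_letters: "finite code_letters"
  by (simp add: code_letters_def)

lemma card_code_letters: "card code_letters \<le> 20"
proof -
  have "card code_letters \<le> Suc (card (Some ` {-5..13::int}))"
    unfolding code_letters_def by (rule card_insert_le_m1[THEN le_trans]) auto
  also have "card (Some ` {-5..13::int}) \<le> card {-5..13::int}" by (rule card_image_le) simp
  finally show ?thesis by simp
qed

lemma card_code_words: "card {xs. set xs \<subseteq> code_letters \<and> length xs = k} \<le> 20^k"
  unfolding card_lists_length_eq[OF finite_code_letters] by (rule power_mono[OF card_code_letters]) simp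

lemma osc_codes_subset: "osc_codes L \<subseteq> {xs. set xs \<subseteq> code_letters \<and> length xs = L}"
  by (auto simp: osc_codes_def)

lemma finite_osc_codes: "finite (osc_codes L)"
  using finite_subset[OF osc_codes_subset finite_lists_length_eq[OF finite_code_letters]] .

lemma osc_codes_middle:
  assumes "c \<in> osc_codes L" "24 \<le> L"
  shows "take (L-24) (drop 12 c) \<in> admissible_words (L-24)"
proof -
  let ?v = "take (L-24) (drop 12 c)"
  have len: "length c = L" and adm: "\<And>r. 12 \<le> r \<Longrightarrow> r + 12 \<le> L \<Longrightarrow> admissible (c!(r-1)) (c!r) (c!(Suc r))"
    using assms(1) by (auto simp: osc_codes_def)
  have length: "length ?v = L - 24" using len assms(2) by simp
  have nth: "?v!i = c!(12+i)" if "i < L-24" for i using that len by simp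
  have "?v!i \<in> inner_letters" if "i < L-24" for i
    using adm[of "12+i"] that nth[OF that] assms(2) unfolding admissible_def by auto
  then have "set ?v \<subseteq> inner_letters" using length by (auto simp: in_set_conv_nth)
  moreover have "admissible (?v!(i-1)) (?v!i) (?v!(Suc i))" if "0 < i" "Suc i < L-24" for i
    using adm[of "12+i"] nth[of "i-1"] nth[of i] nth[of "Suc i"] that by simp
  ultimately show ?thesis unfolding admissible_words_def using length by auto
qed

lemma card_osc_codes_split:
  assumes L: "24 \<le> L"
  shows "card (osc_codes L) \<le> 20^24 * card (admissible_words (L-24))"
proof -
  define W where "W k = {xs. set xs \<subseteq> code_letters \<and> length xs = k}" for k
  define h where "h c = (take 12 c, drop (L-12) c, take (L-24) (drop 12 c))" for c :: "int option list"
  have split: "c = take 12 c @ take (L-24) (drop 12 c) @ drop (L-12) c" if "length c = L" for c :: "int option list"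
  proof -
    have "drop (L-24) (drop 12 c) = drop (L-12) c" using L by simp
    then have "drop 12 c = take (L-24) (drop 12 c) @ drop (L-12) c"
      by (metis append_take_drop_id)
    then show ?thesis by (metis append_take_drop_id)
  qed
  have "inj_on h (osc_codes L)"
  proof (rule inj_onI)
    fix c c' assume "c \<in> osc_codes L" "c' \<in> osc_codes L" "h c = h c'"
    then show "c = c'" using split[of c] split[of c'] by (auto simp: osc_codes_def h_def)
  qed
  moreover have "h ` osc_codes L \<subseteq> W 12 \<times> W 12 \<times> admissible_words (L-24)"
    using osc_codes_middle[OF _ L] L
    by (auto simp: h_def W_def osc_codes_def dest: in_set_takeD in_set_dropD)
  moreover have "finite (W 12 \<times> W 12 \<times> admissible_words (L-24))"
    unfolding W_def by (intro finite_cartesian_product finite_lists_length_eq finite_code_letters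
        finite_admissible_words)
  ultimately have "card (osc_codes L) \<le> card (W 12 \<times> W 12 \<times> admissible_words (L-24))"
    by (rule card_inj_on_le)
  also have "\<dots> = card (W 12) * card (W 12) * card (admissible_words (L-24))"
    by (simp add: card_cartesian_product)
  also have "\<dots> \<le> 20^12 * 20^12 * card (admissible_words (L-24))"
    using card_code_words[of 12] unfolding W_def by (intro mult_mono) auto
  finally show ?thesis by (simp add: power_add[symmetric])
qed

lemma card_osc_codes: "card (osc_codes L) \<le> 20^27 * (23/10)^L"
proof (cases "26 \<le> L")
  case True
  define k where "k = L - 26"
  have "L - 24 = k + 2" using True unfolding k_def by simp
  then have "card (osc_codes L) \<le> 20^24 * card (admissible_words (k+2))"
    using card_osc_codes_split[of L] True by simp
  then have "real (card (osc_codes L)) \<le> real (20^24 * card (admissible_words (k+2)))"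
    by (rule of_nat_mono)
  also have "\<dots> = 20^24 * real (card (admissible_words (k+2)))"
    by simp
  also have "\<dots> \<le> 20^24 * (2000 * (23/10)^k)"
    using card_admissible_words[of k] by (intro mult_left_mono) auto
  also have "\<dots> \<le> 20^27 * (23/10)^L"
  proof -
    have "(23/10::real)^k \<le> (23/10)^L" unfolding k_def by (intro power_increasing) auto
    also have "\<dots> \<le> 4 * (23/10)^L" by simp
    finally show ?thesis by simp
  qed
  finally show ?thesis .
next
  case False
  have "card (osc_codes L) \<le> card {xs. set xs \<subseteq> code_letters \<and> length xs = L}"
    by (rule card_mono[OF finite_lists_length_eq[OF finite_code_letters] osc_codes_subset])
  also have "\<dots> \<le> 20^L" by (rule card_code_words)
  also have "\<dots> \<le> 20^27" using False by (intro power_increasing) auto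
  finally have "real (card (osc_codes L)) \<le> real (20^27)" by (rule of_nat_mono)
  also have "\<dots> \<le> 20^27 * (23/10)^L" by simp
  finally show ?thesis .
qed

section \<open>The constant\<close>

definition quintic :: "real \<Rightarrow> real" where
  "quintic x = x^5 - x^4 - 2*x^3 - 2*x^2 - x - 1"

lemma quintic_neg_if_nonpos:
  assumes "x \<le> 0"
  shows "quintic x < 0"
proof -
  have "quintic x = x * (x^4 - 1) - 1 - x^2 * ((x+1)^2 + 1)"
    unfolding quintic_def by (simp add: eval_nat_numeral algebra_simps)
  moreover have "x^2 * ((x+1)^2 + 1) \<ge> 0" by simp
  moreover have "x * (x^4 - 1) - 1 < 0"
  proof (cases "x \<le> -1")
    case True
    then have "1 \<le> (-x)^4" by (intro one_le_power) auto
    then have "x * (x^4 - 1) \<le> 0" using assms by (simp add: mult_nonpos_nonneg)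
    then show ?thesis by simp
  next
    case False
    have "x * x^4 \<le> 0" using assms by (simp add: mult_nonpos_nonneg)
    then show ?thesis using False by (simp add: algebra_simps)
  qed
  ultimately show ?thesis by linarith
qed

lemma quintic_root_unique:
  assumes "quintic x = 0" "quintic y = 0"
  shows "x = y"
proof -
  define g :: "real \<Rightarrow> real" where "g u = 1/u + 2/u^2 + 2/u^3 + 1/u^4 + 1/u^5" for u
  have quintic_g: "quintic u = u^5 * (1 - g u)" if "u > 0" for u
    using that unfolding quintic_def g_def by (simp add: field_simps eval_nat_numeral)
  have "\<not> x \<le> 0" "\<not> y \<le> 0" using quintic_neg_if_nonpos assms by force+
  then have pos: "x > 0" "y > 0" by auto
  then have "g x = 1" "g y = 1" using assms quintic_g by simp_all
  moreover have "g v < g u" if "0 < u" "u < v" for u v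
  proof -
    have "1/v < 1/u" "1/v^2 < 1/u^2" "1/v^3 < 1/u^3" "1/v^4 < 1/u^4" "1/v^5 < 1/u^5"
      using that by (auto intro!: divide_strict_left_mono power_strict_mono mult_pos_pos)
    then show ?thesis unfolding g_def by linarith
  qed
  ultimately show ?thesis using pos by (metis less_irrefl linorder_neqE_linordered_idom)
qed

lemma root_const_ge: "root_const \<ge> 23/10"
proof -
  have "continuous_on {23/10..3} quintic" unfolding quintic_def by (intro continuous_intros)
  moreover have "quintic (23/10) \<le> 0" "0 \<le> quintic 3"
    unfolding quintic_def by (simp_all add: power_def eval_nat_numeral)
  ultimately obtain x where x: "23/10 \<le> x" "quintic x = 0"
    using IVT'[of quintic "23/10" 0 3] by auto
  have "root_const = x" unfolding root_const_def
  proof (rule the_equality)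
    show "x^5 - x^4 - 2*x^3 - 2*x^2 - x - 1 = 0" using x quintic_def by simp
    fix y :: real assume "y^5 - y^4 - 2*y^3 - 2*y^2 - y - 1 = 0"
    then show "y = x" using quintic_root_unique[of y x] x quintic_def by simp
  qed
  then show ?thesis using x by simp
qed

section \<open>Growth of the oscillation class\<close>

definition osc_patterns :: "nat list set" where
  "osc_patterns = down_closure (range (\<lambda>k. osc (k+2)))"

definition osc_occurrence :: "nat list \<Rightarrow> nat \<Rightarrow> nat list \<Rightarrow> bool" where
  "osc_occurrence p m ps \<longleftrightarrow>
     osc_positions m ps \<and> length ps = length p \<and> order_iso (map ((!) (osc m)) ps) p"

lemma osc_occurrence_exists:
  assumes "p \<in> osc_patterns"
  shows "\<exists>m ps. osc_occurrence p m ps"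
proof -
  obtain k where "pattern_le p (osc (k+2))" using assms by (auto simp: osc_patterns_def down_closure_def)
  then obtain ps where ps: "sorted_wrt (<) ps" "\<forall>x\<in>set ps. x < length (osc (k+2))"
    "length ps = length p" "order_iso (map ((!) (osc (k+2))) ps) p"
    by (rule pattern_le_positions)
  then have "osc_positions (k+2) ps" by unfold_locales auto
  then show ?thesis using ps unfolding osc_occurrence_def by blast
qed

lemma osc_occurrence_inversion_iff:
  assumes "osc_occurrence p m ps" "s < t" "t < length ps"
  shows "map ((!) (osc m)) ps ! t < map ((!) (osc m)) ps ! s \<longleftrightarrow> unit_adj (map (osc_height m) ps) s t"
proof -
  interpret osc_positions m ps using assms(1) by (simp add: osc_occurrence_def)
  have "ps!s < ps!t" "ps!s < 2*m+4" "ps!t < 2*m+4" using nth_less nth_bound assms by auto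
  then show ?thesis
    using osc_inversion_iff[OF m2 \<open>ps!s < ps!t\<close>] assms
    by (simp add: unit_adj_def osc_adj_def abs_minus_commute)
qed

lemma osc_occurrence_distinct:
  assumes "osc_occurrence p m ps"
  shows "distinct (map ((!) (osc m)) ps)"
proof -
  interpret osc_positions m ps using assms by (simp add: osc_occurrence_def)
  have "distinct (osc m)" using osc_in_perms[OF m2] by (simp add: perms_def)
  have "inj_on ((!) (osc m)) (set ps)"
  proof (rule inj_onI)
    fix x y assume "x \<in> set ps" "y \<in> set ps" "osc m ! x = osc m ! y"
    then show "x = y" using bound \<open>distinct (osc m)\<close> nth_eq_iff_index_eq[of "osc m" x y] by auto
  qed
  moreover have "distinct ps" using sorted by (simp add: strict_sorted_iff)
  ultimately show ?thesis by (simp add: distinct_map)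
qed

text \<open>\<open>pattern_code p\<close> is read off an arbitrary occurrence of \<open>p\<close>; injectivity
  (\<open>pattern_code_inj\<close>) holds for every choice, since the code determines the inversions.\<close>

definition pattern_code :: "nat list \<Rightarrow> int option list" where
  "pattern_code p = (SOME c. \<exists>m ps. osc_occurrence p m ps \<and> c = gap_code (map (osc_height m) ps))"

lemma pattern_codeE:
  assumes "p \<in> osc_patterns"
  obtains m ps where "osc_occurrence p m ps" "pattern_code p = gap_code (map (osc_height m) ps)"
proof -
  have "\<exists>m ps. osc_occurrence p m ps \<and> pattern_code p = gap_code (map (osc_height m) ps)"
    unfolding pattern_code_def by (rule someI_ex) (use osc_occurrence_exists[OF assms] in blast)
  then show ?thesis using that by blast
qed

lemma pattern_code_in_osc_codes:
  assumes "p \<in> osc_patterns" "length p = n"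
  shows "pattern_code p \<in> osc_codes (n-1)"
proof -
  obtain m ps where occ: "osc_occurrence p m ps" and code: "pattern_code p = gap_code (map (osc_height m) ps)"
    using pattern_codeE[OF assms(1)] by blast
  interpret osc_positions m ps using occ by (simp add: osc_occurrence_def)
  have "length ps = n" using occ assms by (simp add: osc_occurrence_def)
  moreover have "admissible (pattern_code p!(r-1)) (pattern_code p!r) (pattern_code p!(Suc r))"
    if "12 \<le> r" "r + 12 \<le> n - 1" for r
  proof -
    interpret osc_window m ps r using that \<open>length ps = n\<close> by unfold_locales auto
    show ?thesis using window_admissible code by (simp add: heights_def)
  qed
  ultimately show ?thesis using gap_code_letters code
    unfolding osc_codes_def heights_def by (auto simp: length_gap_code)
qed

lemma pattern_code_inj:
  assumes "p \<in> osc_patterns" "p' \<in> osc_patterns" "p \<in> perms n" "p' \<in> perms n"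
    and "pattern_code p = pattern_code p'"
  shows "p = p'"
proof -
  obtain m ps where occ: "osc_occurrence p m ps" and code: "pattern_code p = gap_code (map (osc_height m) ps)"
    using pattern_codeE[OF assms(1)] by blast
  obtain m' ps' where occ': "osc_occurrence p' m' ps'"
    and code': "pattern_code p' = gap_code (map (osc_height m') ps')"
    using pattern_codeE[OF assms(2)] by blast
  have len: "length ps = n" "length ps' = n"
    using occ occ' assms(3,4) perms_length by (auto simp: osc_occurrence_def)
  have "order_iso (map ((!) (osc m)) ps) (map ((!) (osc m')) ps')"
  proof (rule order_iso_if_same_inversions)
    fix s t assume st: "s < t" "t < length (map ((!) (osc m)) ps)"
    have "unit_adj (map (osc_height m) ps) s t \<longleftrightarrow> unit_adj (map (osc_height m') ps') s t"
      by (rule unit_adj_eq_if_gap_code_eq) (use len code code' assms(5) st in auto)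
    then show "map ((!) (osc m)) ps ! t < map ((!) (osc m)) ps ! s \<longleftrightarrow>
        map ((!) (osc m')) ps' ! t < map ((!) (osc m')) ps' ! s"
      using osc_occurrence_inversion_iff[OF occ, of s t] osc_occurrence_inversion_iff[OF occ', of s t] st len
      by simp
  qed (use osc_occurrence_distinct[OF occ] osc_occurrence_distinct[OF occ'] len in auto)
  then have "order_iso p p'"
    using occ occ' order_iso_sym order_iso_trans unfolding osc_occurrence_def by blast
  then show ?thesis using order_iso_perms_eq assms(3,4) by blast
qed

lemma card_osc_patterns:
  assumes "n \<ge> 1"
  shows "card (osc_patterns \<inter> perms n) \<le> 20^27 * (23/10)^n"
proof -
  have "inj_on pattern_code (osc_patterns \<inter> perms n)"
    using pattern_code_inj by (auto intro!: inj_onI)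
  moreover have "pattern_code ` (osc_patterns \<inter> perms n) \<subseteq> osc_codes (n-1)"
    using pattern_code_in_osc_codes perms_length by auto
  ultimately have "card (osc_patterns \<inter> perms n) \<le> card (osc_codes (n-1))"
    by (rule card_inj_on_le[OF _ _ finite_osc_codes])
  then have "real (card (osc_patterns \<inter> perms n)) \<le> card (osc_codes (n-1))" by simp
  also have "\<dots> \<le> 20^27 * (23/10)^(n-1)" by (rule card_osc_codes)
  also have "\<dots> \<le> 20^27 * (23/10)^n" by (intro mult_left_mono power_increasing) auto
  finally show ?thesis .
qed

theorem mainTheorem11:
  fixes \<epsilon> :: real
  assumes "\<epsilon> > 0"
  shows "uncountable (K (root_const + \<epsilon>))"
proof (rule uncountable_K_of_family)
  show "inj (\<lambda>S. down_closure ((\<lambda>k. osc (k+2)) ` S))"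
    by (rule inj_down_closure_antichain[OF _ osc_antichain]) (simp add: osc_in_allPerms)
  show "down_closure ((\<lambda>k. osc (k+2)) ` S) \<subseteq> osc_patterns" for S
    unfolding osc_patterns_def by (rule down_closure_mono) blast
  show "23/10 < root_const + \<epsilon>" using root_const_ge assms by linarith
qed (use closed_class_down_closure card_osc_patterns in auto)

end
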